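(* Let $\mathbb P\in\mathcal P^o$, let $x^\star(\mathbb P)\in\arg\min\{\mathrm{Var}_{\mathbb P}(\ell(x,\xi)):x\in\arg\min_{x'\in\mathcal X}c(x',\mathbb P)\}$ be a minimizer of $c(\cdot,\mathbb P)$ of lowest variance, and for each $T$ let $\hat x^{\mathrm V}_T(\mathbb P)\in\arg\min_{x\in\mathcal X}\hat c_{\mathrm V}(x,\mathbb P,T)$ and $\hat c_{\mathrm V}^\star(\mathbb P,T)=\min_{x\in\mathcal X}\hat c_{\mathrm V}(x,\mathbb P,T)$. Then for all $T\in\mathbb N$, $$|\hat c_{\mathrm V}^\star(\mathbb P,T)-c^\star(\mathbb P)|\le\sqrt{\tfrac{2a_T}{T}\mathrm{Var}_{\mathbb P}(\ell(x^\star(\mathbb P),\xi))}.$$ If moreover $a_T/T\to0$, then $\hat c_{\mathrm V}^\star(\mathbb P,T)-c^\star(\mathbb P)=\sqrt{\frac{2a_T}{T}\mathrm{Var}_{\mathbb P}(\ell(x^\star(\mathbb P),\xi))}+o\big(\sqrt{a_T/T}\big)$ and $\mathrm{Var}_{\mathbb P}(\ell(\hat x^{\mathrm V}_T(\mathbb P),\xi))\to\mathrm{Var}_{\mathbb P}(\ell(x^\star(\mathbb P),\xi))$ as $T\to\infty$.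
   Context: $\Sigma=\{1,\dots,d\}$ finite, $\mathcal P$ the probability simplex and $\mathcal P^o$ its relative interior. $\mathcal X\subset\mathbb R^n$ compact, $\ell:\mathcal X\times\Sigma\to\mathbb R$ continuous in $x$. $c(x,\mathbb P)=\sum_i\ell(x,i)\mathbb P(i)$, $c^\star(\mathbb P)=\min_{x\in\mathcal X}c(x,\mathbb P)$, $\mathrm{Var}_{\mathbb P}(\ell(x,\xi))=\sum_i\mathbb P(i)(\ell(x,i)-c(x,\mathbb P))^2$. $(a_T)$ is a sequence of positive reals. SVP predictor: $\hat c_{\mathrm V}(x,\mathbb P,T)=c(x,\mathbb P)+\sqrt{\frac{2a_T}{T}\mathrm{Var}_{\mathbb P}(\ell(x,\xi))}$. *)

theory Defs
  imports "HOL-Analysis.Analysis" "HOL-Library.Landau_Symbols"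
begin

text \<open>Outcome space \<open>\<Sigma> = {1..d}\<close>; distributions are functions \<open>nat \<Rightarrow> real\<close>.\<close>

definition simplex_interior :: "nat \<Rightarrow> (nat \<Rightarrow> real) set" where
  "simplex_interior d = {P. (\<forall>i\<in>{1..d}. P i > 0) \<and> (\<Sum>i=1..d. P i) = 1}"

definition cost :: "nat \<Rightarrow> ('a \<Rightarrow> nat \<Rightarrow> real) \<Rightarrow> 'a \<Rightarrow> (nat \<Rightarrow> real) \<Rightarrow> real" where
  "cost d l x P = (\<Sum>i=1..d. l x i * P i)"

definition opt_cost :: "nat \<Rightarrow> 'a set \<Rightarrow> ('a \<Rightarrow> nat \<Rightarrow> real) \<Rightarrow> (nat \<Rightarrow> real) \<Rightarrow> real" where
  "opt_cost d X l P = (INF x\<in>X. cost d l x P)"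

definition var_loss :: "nat \<Rightarrow> ('a \<Rightarrow> nat \<Rightarrow> real) \<Rightarrow> 'a \<Rightarrow> (nat \<Rightarrow> real) \<Rightarrow> real" where
  "var_loss d l x P = (\<Sum>i=1..d. P i * (l x i - cost d l x P)^2)"

definition svp :: "nat \<Rightarrow> ('a \<Rightarrow> nat \<Rightarrow> real) \<Rightarrow> (nat \<Rightarrow> real) \<Rightarrow> 'a \<Rightarrow> (nat \<Rightarrow> real) \<Rightarrow> nat \<Rightarrow> real" where
  "svp d l a x P T = cost d l x P + sqrt (2 * a T / real T * var_loss d l x P)"

definition svp_opt :: "nat \<Rightarrow> 'a set \<Rightarrow> ('a \<Rightarrow> nat \<Rightarrow> real) \<Rightarrow> (nat \<Rightarrow> real) \<Rightarrow> (nat \<Rightarrow> real) \<Rightarrow> nat \<Rightarrow> real" where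
  "svp_opt d X l a P T = (INF x\<in>X. svp d l a x P T)"

end

theory Submission
  imports Defs
begin

text \<open>Write \<open>c\<close> for the expected cost, \<open>v\<close> for the variance and \<open>r = a\<^sub>T/T\<close>. Comparing
  the SVP minimizer \<open>x\<^sub>T\<close> with \<open>x\<^sup>\<star>\<close> in both objectives gives
  \<open>c(x\<^sup>\<star>) \<le> c(x\<^sub>T)\<close> and \<open>c(x\<^sub>T) + \<surd>(2r v(x\<^sub>T)) \<le> c(x\<^sup>\<star>) + \<surd>(2r v(x\<^sup>\<star>))\<close>, which yields
  the bound and \<open>v(x\<^sub>T) \<le> v(x\<^sup>\<star>)\<close>. If \<open>r \<rightarrow> 0\<close> then \<open>c(x\<^sub>T) \<rightarrow> c(x\<^sup>\<star>)\<close>; by compactness the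
  points with \<open>v \<le> v(x\<^sup>\<star>) - \<epsilon>\<close> have cost bounded away from \<open>c(x\<^sup>\<star>)\<close>, because \<open>x\<^sup>\<star>\<close> has
  least variance among the cost minimizers, so \<open>v(x\<^sub>T) \<rightarrow> v(x\<^sup>\<star>)\<close>. The gap, divided by
  \<open>\<surd>r\<close>, is then squeezed between \<open>\<surd>2 (\<surd>v(x\<^sub>T) - \<surd>v(x\<^sup>\<star>))\<close> and \<open>0\<close>.\<close>

lemma var_loss_nonneg:
  assumes "\<And>i. i \<in> {1..d} \<Longrightarrow> P i \<ge> 0"
  shows "var_loss d l x P \<ge> 0"
  unfolding var_loss_def using assms by (intro sum_nonneg) auto

lemma continuous_on_cost:
  assumes "\<And>i. i \<in> {1..d} \<Longrightarrow> continuous_on X (\<lambda>x. l x i)"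
  shows "continuous_on X (\<lambda>x. cost d l x P)"
  unfolding cost_def using assms by (intro continuous_intros) auto

lemma continuous_on_var_loss:
  assumes "\<And>i. i \<in> {1..d} \<Longrightarrow> continuous_on X (\<lambda>x. l x i)"
  shows "continuous_on X (\<lambda>x. var_loss d l x P)"
  unfolding var_loss_def cost_def using assms by (intro continuous_intros) auto

lemma penalized_minimizer_var_le:
  fixes s c\<^sub>0 c\<^sub>1 v\<^sub>0 v\<^sub>1 :: real
  assumes "s > 0" "c\<^sub>0 \<le> c\<^sub>1" "c\<^sub>1 + sqrt (s * v\<^sub>1) \<le> c\<^sub>0 + sqrt (s * v\<^sub>0)"
  shows "v\<^sub>1 \<le> v\<^sub>0"
proof -
  from assms(2,3) have "sqrt (s * v\<^sub>1) \<le> sqrt (s * v\<^sub>0)" by linarith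
  then have "s * v\<^sub>1 \<le> s * v\<^sub>0" by simp
  with \<open>s > 0\<close> show ?thesis by simp
qed

lemma secondary_objective_tendsto:
  fixes f g :: "'a::t2_space \<Rightarrow> real"
  assumes "compact X" "continuous_on X f" "continuous_on X g"
    and "x\<^sub>0 \<in> X" "\<And>x. x \<in> X \<Longrightarrow> f x\<^sub>0 \<le> f x"
    and "\<And>x. x \<in> X \<Longrightarrow> (\<forall>y\<in>X. f x \<le> f y) \<Longrightarrow> g x\<^sub>0 \<le> g x"
    and "\<And>n. xs n \<in> X" "(\<lambda>n. f (xs n)) \<longlonglongrightarrow> f x\<^sub>0"
    and "eventually (\<lambda>n. g (xs n) \<le> g x\<^sub>0) sequentially"
  shows "(\<lambda>n. g (xs n)) \<longlonglongrightarrow> g x\<^sub>0"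
proof (rule tendstoI)
  fix e :: real assume "e > 0"
  define K where "K = X \<inter> g -` {..g x\<^sub>0 - e}"
  have "closed K"
    unfolding K_def using assms(3) compact_imp_closed[OF assms(1)]
    by (rule continuous_closed_preimage) simp
  then have "compact K"
    unfolding K_def using assms(1) by (metis Int_absorb1 Int_lower1 compact_Int_closed)
  have avoid_K: "eventually (\<lambda>n. xs n \<notin> K) sequentially"
  proof (cases "K = {}")
    case False
    have "continuous_on K f" using assms(2) K_def continuous_on_subset by blast
    then obtain k where k: "k \<in> K" "\<And>y. y \<in> K \<Longrightarrow> f k \<le> f y"
      using continuous_attains_inf[OF \<open>compact K\<close> False] by blast
    have "f x\<^sub>0 < f k"
    proof (rule ccontr)
      assume "\<not> f x\<^sub>0 < f k"
      with k(1) assms(5) have "\<forall>y\<in>X. f k \<le> f y" unfolding K_def by force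
      with k(1) assms(6) have "g x\<^sub>0 \<le> g k" unfolding K_def by blast
      with k(1) \<open>e > 0\<close> show False unfolding K_def by auto
    qed
    with assms(8) have "eventually (\<lambda>n. f (xs n) < f k) sequentially"
      by (rule order_tendstoD)
    then show ?thesis by eventually_elim (use k(2) in force)
  qed simp
  show "eventually (\<lambda>n. dist (g (xs n)) (g x\<^sub>0) < e) sequentially"
    using avoid_K assms(9)
  proof eventually_elim
    case (elim n)
    with assms(7)[of n] \<open>e > 0\<close> show ?case unfolding K_def by (auto simp: dist_real_def)
  qed
qed

lemma penalized_gap_smallo:
  fixes r c v :: "nat \<Rightarrow> real" and c\<^sub>0 v\<^sub>0 :: real
  assumes "eventually (\<lambda>n. r n > 0) sequentially"
    and "\<And>n. c\<^sub>0 \<le> c n"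
    and "\<And>n. c n + sqrt (2 * r n * v n) \<le> c\<^sub>0 + sqrt (2 * r n * v\<^sub>0)"
    and "v \<longlonglongrightarrow> v\<^sub>0"
  shows "(\<lambda>n. c n + sqrt (2 * r n * v n) - c\<^sub>0 - sqrt (2 * r n * v\<^sub>0)) \<in> o(\<lambda>n. sqrt (r n))"
proof (rule smalloI_tendsto)
  define gap where "gap n = c n + sqrt (2 * r n * v n) - c\<^sub>0 - sqrt (2 * r n * v\<^sub>0)" for n
  show "eventually (\<lambda>n. sqrt (r n) \<noteq> 0) sequentially"
    using assms(1) by eventually_elim simp
  have "(\<lambda>n. sqrt 2 * (sqrt (v n) - sqrt v\<^sub>0)) \<longlonglongrightarrow> sqrt 2 * (sqrt v\<^sub>0 - sqrt v\<^sub>0)"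
    by (intro tendsto_intros assms(4))
  then have lower_tendsto: "(\<lambda>n. sqrt 2 * (sqrt (v n) - sqrt v\<^sub>0)) \<longlonglongrightarrow> 0" by simp
  have upper: "eventually (\<lambda>n. gap n / sqrt (r n) \<le> 0) sequentially"
    using assms(1)
  proof eventually_elim
    case (elim n)
    have "gap n \<le> 0" using assms(3)[of n] unfolding gap_def by linarith
    with elim show ?case by (simp add: divide_nonpos_pos)
  qed
  have lower: "eventually (\<lambda>n. sqrt 2 * (sqrt (v n) - sqrt v\<^sub>0) \<le> gap n / sqrt (r n)) sequentially"
    using assms(1)
  proof eventually_elim
    case (elim n)
    have "gap n = (c n - c\<^sub>0) + sqrt (r n) * (sqrt 2 * (sqrt (v n) - sqrt v\<^sub>0))"
      unfolding gap_def by (simp add: real_sqrt_mult algebra_simps)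
    with assms(2)[of n] have "sqrt (r n) * (sqrt 2 * (sqrt (v n) - sqrt v\<^sub>0)) \<le> gap n"
      by linarith
    with elim show ?case by (simp add: pos_le_divide_eq mult.commute)
  qed
  show "(\<lambda>n. gap n / sqrt (r n)) \<longlonglongrightarrow> 0"
    by (rule tendsto_sandwich[OF lower upper lower_tendsto tendsto_const])
qed

lemma penalized_minimizers_asymptotics:
  fixes c v :: "'a::t2_space \<Rightarrow> real" and r :: "nat \<Rightarrow> real" and xs :: "nat \<Rightarrow> 'a"
  assumes X: "compact X" and c_cont: "continuous_on X c" and v_cont: "continuous_on X v"
    and v_nonneg: "\<And>x. x \<in> X \<Longrightarrow> v x \<ge> 0"
    and x0_in: "x\<^sub>0 \<in> X" and x0_min: "\<And>x. x \<in> X \<Longrightarrow> c x\<^sub>0 \<le> c x"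
    and x0_var: "\<And>x. x \<in> X \<Longrightarrow> (\<forall>y\<in>X. c x \<le> c y) \<Longrightarrow> v x\<^sub>0 \<le> v x"
    and xs_in: "\<And>n. xs n \<in> X"
    and xs_min: "\<And>n x. x \<in> X \<Longrightarrow> c (xs n) + sqrt (2 * r n * v (xs n)) \<le> c x + sqrt (2 * r n * v x)"
    and r_pos: "eventually (\<lambda>n. r n > 0) sequentially" and r_tendsto: "r \<longlonglongrightarrow> 0"
  shows "(\<lambda>n. v (xs n)) \<longlonglongrightarrow> v x\<^sub>0"
    and "(\<lambda>n. c (xs n) + sqrt (2 * r n * v (xs n)) - c x\<^sub>0 - sqrt (2 * r n * v x\<^sub>0)) \<in> o(\<lambda>n. sqrt (r n))"
proof -
  have cost_le: "c x\<^sub>0 \<le> c (xs n)" for n using x0_min xs_in by blast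
  have penalized_le: "c (xs n) + sqrt (2 * r n * v (xs n)) \<le> c x\<^sub>0 + sqrt (2 * r n * v x\<^sub>0)" for n
    using xs_min x0_in by blast
  have "(\<lambda>n. c x\<^sub>0 + sqrt (2 * r n * v x\<^sub>0)) \<longlonglongrightarrow> c x\<^sub>0 + sqrt (2 * 0 * v x\<^sub>0)"
    by (intro tendsto_intros r_tendsto)
  then have upper_tendsto: "(\<lambda>n. c x\<^sub>0 + sqrt (2 * r n * v x\<^sub>0)) \<longlonglongrightarrow> c x\<^sub>0" by simp
  have cost_upper: "eventually (\<lambda>n. c (xs n) \<le> c x\<^sub>0 + sqrt (2 * r n * v x\<^sub>0)) sequentially"
    using r_pos
  proof eventually_elim
    case (elim n)
    then have "0 \<le> sqrt (2 * r n * v (xs n))" using v_nonneg[OF xs_in] by simp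
    with penalized_le[of n] show ?case by linarith
  qed
  have cost_tendsto: "(\<lambda>n. c (xs n)) \<longlonglongrightarrow> c x\<^sub>0"
    by (rule tendsto_sandwich[OF _ cost_upper tendsto_const upper_tendsto]) (simp add: cost_le)
  have var_le: "eventually (\<lambda>n. v (xs n) \<le> v x\<^sub>0) sequentially"
    using r_pos by eventually_elim (simp add: penalized_minimizer_var_le[OF _ cost_le penalized_le])
  show var_tendsto: "(\<lambda>n. v (xs n)) \<longlonglongrightarrow> v x\<^sub>0"
    using X c_cont v_cont x0_in x0_min x0_var xs_in cost_tendsto var_le
    by (rule secondary_objective_tendsto)
  show "(\<lambda>n. c (xs n) + sqrt (2 * r n * v (xs n)) - c x\<^sub>0 - sqrt (2 * r n * v x\<^sub>0)) \<in> o(\<lambda>n. sqrt (r n))"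
    using r_pos cost_le penalized_le var_tendsto by (rule penalized_gap_smallo)
qed

theorem mainTheorem16:
  fixes d :: nat and X :: "'n::euclidean_space set" and l :: "'n \<Rightarrow> nat \<Rightarrow> real"
    and a :: "nat \<Rightarrow> real" and P :: "nat \<Rightarrow> real"
    and xstar :: 'n and xhat :: "nat \<Rightarrow> 'n"
  assumes d: "d \<ge> 1"
    and X: "compact X" "X \<noteq> {}"
    and lcont: "\<And>i. i \<in> {1..d} \<Longrightarrow> continuous_on X (\<lambda>x. l x i)"
    and apos: "\<And>T. a T > 0"
    and P: "P \<in> simplex_interior d"
    and xstar_in: "xstar \<in> X"
    and xstar_min: "\<And>x. x \<in> X \<Longrightarrow> cost d l xstar P \<le> cost d l x P"
    and xstar_var: "\<And>x. x \<in> X \<Longrightarrow> (\<forall>y\<in>X. cost d l x P \<le> cost d l y P)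
                      \<Longrightarrow> var_loss d l xstar P \<le> var_loss d l x P"
    and xhat_in: "\<And>T. xhat T \<in> X"
    and xhat_min: "\<And>T x. x \<in> X \<Longrightarrow> svp d l a (xhat T) P T \<le> svp d l a x P T"
  shows "(\<forall>T::nat. T \<ge> 1 \<longrightarrow>
            \<bar>svp_opt d X l a P T - opt_cost d X l P\<bar>
              \<le> sqrt (2 * a T / real T * var_loss d l xstar P))
       \<and> ((\<lambda>T. a T / real T) \<longlonglongrightarrow> 0 \<longrightarrow>
            (\<lambda>T. svp_opt d X l a P T - opt_cost d X l P
                   - sqrt (2 * a T / real T * var_loss d l xstar P))
              \<in> o(\<lambda>T. sqrt (a T / real T))
          \<and> (\<lambda>T. var_loss d l (xhat T) P) \<longlonglongrightarrow> var_loss d l xstar P)"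
proof -
  define c where "c x = cost d l x P" for x
  define v where "v x = var_loss d l x P" for x
  define r where "r T = a T / real T" for T
  have svp_eq: "svp d l a x P T = c x + sqrt (2 * r T * v x)" for x T
    by (simp add: svp_def c_def v_def r_def)
  have v_nonneg: "v x \<ge> 0" for x
    unfolding v_def using P by (intro var_loss_nonneg) (auto simp: simplex_interior_def less_imp_le)
  have opt: "opt_cost d X l P = c xstar"
    unfolding opt_cost_def c_def by (rule cInf_eq_minimum) (use xstar_in xstar_min in auto)
  have svp_opt: "svp_opt d X l a P T = c (xhat T) + sqrt (2 * r T * v (xhat T))" for T
    unfolding svp_opt_def by (rule cInf_eq_minimum) (use xhat_in xhat_min svp_eq in auto)
  have bound: "\<bar>svp_opt d X l a P T - opt_cost d X l P\<bar> \<le> sqrt (2 * r T * v xstar)" for T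
  proof -
    have "0 \<le> sqrt (2 * r T * v (xhat T))" using apos[of T] v_nonneg by (simp add: r_def)
    with xstar_min[OF xhat_in[of T]] xhat_min[OF xstar_in, of T] show ?thesis
      unfolding svp_opt opt svp_eq c_def by linarith
  qed
  moreover have "(\<lambda>T. v (xhat T)) \<longlonglongrightarrow> v xstar"
      "(\<lambda>T. svp_opt d X l a P T - opt_cost d X l P - sqrt (2 * r T * v xstar)) \<in> o(\<lambda>T. sqrt (r T))"
    if "r \<longlonglongrightarrow> 0"
  proof -
    have c_cont: "continuous_on X c" unfolding c_def using lcont by (rule continuous_on_cost)
    have v_cont: "continuous_on X v" unfolding v_def using lcont by (rule continuous_on_var_loss)
    have r_pos: "eventually (\<lambda>T. r T > 0) sequentially"
      using eventually_ge_at_top[of 1] by eventually_elim (simp add: r_def apos)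
    have c_min: "x \<in> X \<Longrightarrow> c xstar \<le> c x" for x using xstar_min by (simp add: c_def)
    have v_min: "x \<in> X \<Longrightarrow> \<forall>y\<in>X. c x \<le> c y \<Longrightarrow> v xstar \<le> v x" for x
      using xstar_var by (simp add: c_def v_def)
    show "(\<lambda>T. v (xhat T)) \<longlonglongrightarrow> v xstar"
      "(\<lambda>T. svp_opt d X l a P T - opt_cost d X l P - sqrt (2 * r T * v xstar)) \<in> o(\<lambda>T. sqrt (r T))"
      using penalized_minimizers_asymptotics[OF X(1) c_cont v_cont v_nonneg xstar_in c_min v_min xhat_in
          xhat_min[unfolded svp_eq] r_pos that]
      unfolding svp_opt opt by simp_all
  qed
  ultimately show ?thesis
    unfolding times_divide_eq_right[symmetric] r_def[symmetric] v_def[symmetric] by blast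
qed

end
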